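(* Let $p$ be a probability rule for stochastic many-worlds theory satisfying Axioms (A1)–(A3). Then for every allowed state $v=\sum_n v_n\lvert n\rangle$ and every $n\ge0$, $p_n(v)=v_n$.
   Context: Stochastic many-worlds theory is defined as follows. The worlds are the vectors $\lvert n\rangle$, $n\in\{0,1,2,\dots\}$, of a countably infinite basis. The allowed states are the real vectors $v=\sum_n v_n\lvert n\rangle$ with $v_n\ge0$ for all $n$ and $\sum_n v_n=1$, where $v_n$ is the amplitude of world $n$. The allowed transformations are the linear maps $T$ with matrix elements $T_{ij}\ge0$ for all $i,j$ and $\sum_i T_{ij}=1$ for every $j$, acting by $(Tv)_i=\sum_j T_{ij}v_j$. A probability rule assigns to each allowed state $v$ a sequence $(p_n(v))_{n\ge 0}$ of nonnegative reals with $\sum_n p_n(v)=1$. The axioms are: (A1) Present state dependence: $p_n$ depends only on the present state $v$, so $p$ is a function of the state alone. (A2) Weak connection with amplitudes: for every allowed state $v$, $v_n=0$ implies $p_n(v)=0$. (A3) Weak connection with transformations: for every allowed state $v$ and allowed transformation $T$, and every partition of $\{0,1,2,\dots\}$ into subsets $\mathcal S_k$ such that $T_{ij}=0$ whenever $i$ and $j$ lie in different subsets, we have $\sum_{n\in\mathcal S_k}p_n(v)=\sum_{n\in\mathcal S_k}p_n(Tv)$ for every $k$. *)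

theory Defs
  imports "HOL-Analysis.Analysis" "HOL-Library.Disjoint_Sets"
begin

definition allowed_state :: "(nat \<Rightarrow> real) \<Rightarrow> bool" where
  "allowed_state v \<longleftrightarrow> (\<forall>n. v n \<ge> 0) \<and> v sums 1"

text \<open>Allowed transformations: matrices T i j (row i, column j), nonnegative, every column sums to 1.\<close>
definition allowed_trans :: "(nat \<Rightarrow> nat \<Rightarrow> real) \<Rightarrow> bool" where
  "allowed_trans T \<longleftrightarrow> (\<forall>i j. T i j \<ge> 0) \<and> (\<forall>j. (\<lambda>i. T i j) sums 1)"

definition apply_trans :: "(nat \<Rightarrow> nat \<Rightarrow> real) \<Rightarrow> (nat \<Rightarrow> real) \<Rightarrow> nat \<Rightarrow> real" where
  "apply_trans T v i = (\<Sum>j. T i j * v j)"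

text \<open>A probability rule: for every allowed state, a sequence of nonnegative reals summing to 1.
  (A1) is built in by p being a function of the state alone.\<close>
definition prob_rule :: "((nat \<Rightarrow> real) \<Rightarrow> nat \<Rightarrow> real) \<Rightarrow> bool" where
  "prob_rule p \<longleftrightarrow> (\<forall>v. allowed_state v \<longrightarrow> (\<forall>n. p v n \<ge> 0) \<and> p v sums 1)"

definition axiom_A2 :: "((nat \<Rightarrow> real) \<Rightarrow> nat \<Rightarrow> real) \<Rightarrow> bool" where
  "axiom_A2 p \<longleftrightarrow> (\<forall>v n. allowed_state v \<longrightarrow> v n = 0 \<longrightarrow> p v n = 0)"

definition axiom_A3 :: "((nat \<Rightarrow> real) \<Rightarrow> nat \<Rightarrow> real) \<Rightarrow> bool" where
  "axiom_A3 p \<longleftrightarrow> (\<forall>v T P. allowed_state v \<longrightarrow> allowed_trans T \<longrightarrow> partition_on UNIV P \<longrightarrow>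
      (\<forall>S\<in>P. \<forall>S'\<in>P. S \<noteq> S' \<longrightarrow> (\<forall>i\<in>S. \<forall>j\<in>S'. T i j = 0)) \<longrightarrow>
      (\<forall>S\<in>P. (\<Sum>\<^sub>\<infinity>n\<in>S. p v n) = (\<Sum>\<^sub>\<infinity>n\<in>S. p (apply_trans T v) n)))"

end

theory Submission
  imports Defs
begin

text \<open>By (A3) applied to a transformation that fixes world n and spreads the remaining weight of v
  proportionally to that of another state v', the probability p_n(v) depends only on v_n, say
  p_n(v) = f_n(v_n). A transformation merging world n+1 into world n keeps the block {n, n+1}
  closed, so (A2) and (A3) give f_n(a) + f_{n+1}(b) = f_n(a + b); with a = 0 this shows
  f_{n+1} = f_n, hence f_n is additive on [0,1]. Being nonnegative with f_n(1) = 1, it is the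
  identity.\<close>

lemma allowed_state_nonneg: "allowed_state v \<Longrightarrow> 0 \<le> v n"
  by (simp add: allowed_state_def)

lemma allowed_state_sums_except:
  assumes "allowed_state v"
  shows "(\<lambda>j. if j = n then 0 else v j) sums (1 - v n)"
proof -
  have "v sums 1" using assms by (simp add: allowed_state_def)
  from sums_diff[OF this sums_single[of n v]]
  show ?thesis by (simp add: if_distrib cong: if_cong)
qed

lemma allowed_state_le_one:
  assumes "allowed_state v"
  shows "v n \<le> 1"
proof -
  have "0 \<le> suminf (\<lambda>j. if j = n then 0 else v j)"
    using allowed_state_sums_except[OF assms, of n] assms
    by (intro suminf_nonneg) (auto simp: allowed_state_def sums_iff)
  then show ?thesis using allowed_state_sums_except[OF assms, of n] by (simp add: sums_iff)
qed

lemma allowed_state_concentrated: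
  assumes v: "allowed_state v" and "v n = 1" and "j \<noteq> n"
  shows "v j = 0"
proof -
  have "(\<lambda>k. if k = n then 0 else v k) sums 0"
    using allowed_state_sums_except[OF v, of n] \<open>v n = 1\<close> by simp
  then have "\<forall>k. (if k = n then 0 else v k) = 0"
    using v by (subst suminf_eq_zero_iff[symmetric]) (auto simp: sums_iff allowed_state_def)
  then show ?thesis using \<open>j \<noteq> n\<close> by metis
qed

lemma axiom_A3_closed_block:
  assumes A3: "axiom_A3 p" and v: "allowed_state v" and T: "allowed_trans T"
    and B: "finite B" "B \<noteq> {}"
    and out: "\<And>i j. i \<in> B \<Longrightarrow> j \<notin> B \<Longrightarrow> T i j = 0"
    and into: "\<And>i j. i \<notin> B \<Longrightarrow> j \<in> B \<Longrightarrow> T i j = 0"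
  shows "(\<Sum>k\<in>B. p v k) = (\<Sum>k\<in>B. p (apply_trans T v) k)"
proof -
  have "B \<noteq> UNIV" using B(1) infinite_UNIV_nat by auto
  then have partition: "partition_on UNIV {B, -B}"
    using B by (auto simp: partition_on_def disjoint_def)
  have closed: "\<forall>S\<in>{B, -B}. \<forall>S'\<in>{B, -B}. S \<noteq> S' \<longrightarrow> (\<forall>i\<in>S. \<forall>j\<in>S'. T i j = 0)"
    using out into by auto
  have "(\<Sum>\<^sub>\<infinity>k\<in>B. p v k) = (\<Sum>\<^sub>\<infinity>k\<in>B. p (apply_trans T v) k)"
    using A3 v T partition closed unfolding axiom_A3_def by blast
  then show ?thesis using B by simp
qed

definition redistribute_trans :: "nat \<Rightarrow> real \<Rightarrow> (nat \<Rightarrow> real) \<Rightarrow> nat \<Rightarrow> nat \<Rightarrow> real" where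
  "redistribute_trans n c w i j =
     (if i = n then (if j = n then 1 else 0) else if j = n then 0 else w i / (1 - c))"

lemma allowed_trans_redistribute:
  assumes w: "allowed_state w" and c: "c = w n" "c < 1"
  shows "allowed_trans (redistribute_trans n c w)"
  unfolding allowed_trans_def
proof (intro conjI allI)
  fix i j show "0 \<le> redistribute_trans n c w i j"
    using allowed_state_nonneg[OF w] c by (simp add: redistribute_trans_def)
next
  fix j
  show "(\<lambda>i. redistribute_trans n c w i j) sums 1"
  proof (cases "j = n")
    case True
    then have "(\<lambda>i. redistribute_trans n c w i j) = (\<lambda>i. if i = n then 1 else 0)"
      by (intro ext) (simp add: redistribute_trans_def)
    then show ?thesis using sums_single[of n "\<lambda>_. 1 :: real"] by simp
  next
    case False
    then have "(\<lambda>i. redistribute_trans n c w i j) = (\<lambda>i. (if i = n then 0 else w i) / (1 - c))"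
      by (intro ext) (simp add: redistribute_trans_def)
    with sums_divide[OF allowed_state_sums_except[OF w, of n], of "1 - c"] c
    show ?thesis by simp
  qed
qed

lemma apply_redistribute_trans:
  assumes v: "allowed_state v" and c: "c = v n" "c < 1" and w: "w n = c"
  shows "apply_trans (redistribute_trans n c w) v = w"
proof
  fix i
  show "apply_trans (redistribute_trans n c w) v i = w i"
  proof (cases "i = n")
    case True
    then have "(\<lambda>j. redistribute_trans n c w i j * v j) = (\<lambda>j. if j = n then v j else 0)"
      by (intro ext) (simp add: redistribute_trans_def)
    then show ?thesis
      using sums_single[of n v] True c w by (simp add: apply_trans_def sums_iff)
  next
    case False
    then have "(\<lambda>j. redistribute_trans n c w i j * v j)
        = (\<lambda>j. w i / (1 - c) * (if j = n then 0 else v j))"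
      by (intro ext) (simp add: redistribute_trans_def)
    moreover have "w i / (1 - c) * (1 - v n) = w i" using c by simp
    ultimately show ?thesis
      using sums_mult[OF allowed_state_sums_except[OF v, of n], of "w i / (1 - c)"]
      by (simp add: apply_trans_def sums_iff)
  qed
qed

lemma prob_eq_if_amplitude_eq:
  assumes A3: "axiom_A3 p" and v: "allowed_state v" and w: "allowed_state w"
    and eq: "v n = w n"
  shows "p v n = p w n"
proof (cases "v n = 1")
  case True
  have "v = w"
  proof
    fix j show "v j = w j"
      using allowed_state_concentrated[OF v True, of j] allowed_state_concentrated[OF w, of n j]
        True eq by (cases "j = n") auto
  qed
  then show ?thesis by simp
next
  case False
  let ?T = "redistribute_trans n (v n) w"
  have c: "v n < 1" using allowed_state_le_one[OF v, of n] False by simp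
  have T: "allowed_trans ?T" using allowed_trans_redistribute[OF w] eq c by simp
  have "(\<Sum>k\<in>{n}. p v k) = (\<Sum>k\<in>{n}. p (apply_trans ?T v) k)"
    by (rule axiom_A3_closed_block[OF A3 v T]) (auto simp: redistribute_trans_def)
  then show ?thesis using apply_redistribute_trans[OF v refl c] eq by simp
qed

definition three_point_state :: "nat \<Rightarrow> real \<Rightarrow> real \<Rightarrow> nat \<Rightarrow> real" where
  "three_point_state n a b i =
     (if i = n then a else if i = Suc n then b else if i = Suc (Suc n) then 1 - a - b else 0)"

lemma allowed_three_point_state:
  assumes "0 \<le> a" "0 \<le> b" "a + b \<le> 1"
  shows "allowed_state (three_point_state n a b)"
proof -
  have "three_point_state n a b sums (\<Sum>i\<in>{n, Suc n, Suc (Suc n)}. three_point_state n a b i)"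
    by (rule sums_finite) (auto simp: three_point_state_def)
  moreover have "(\<Sum>i\<in>{n, Suc n, Suc (Suc n)}. three_point_state n a b i) = 1"
    by (simp add: three_point_state_def)
  ultimately show ?thesis
    using assms unfolding allowed_state_def by (auto simp: three_point_state_def)
qed

definition amplitude_prob :: "((nat \<Rightarrow> real) \<Rightarrow> nat \<Rightarrow> real) \<Rightarrow> nat \<Rightarrow> real \<Rightarrow> real" where
  "amplitude_prob p n x = p (three_point_state n x 0) n"

lemma prob_eq_amplitude_prob:
  assumes A3: "axiom_A3 p" and v: "allowed_state v"
  shows "p v n = amplitude_prob p n (v n)"
proof -
  have "allowed_state (three_point_state n (v n) 0)"
    using allowed_state_nonneg[OF v] allowed_state_le_one[OF v]
    by (intro allowed_three_point_state) auto
  from prob_eq_if_amplitude_eq[OF A3 v this] show ?thesis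
    by (simp add: amplitude_prob_def three_point_state_def)
qed

lemma amplitude_prob_nonneg:
  assumes "prob_rule p" "0 \<le> x" "x \<le> 1"
  shows "0 \<le> amplitude_prob p n x"
  using assms allowed_three_point_state[of x 0 n]
  unfolding prob_rule_def amplitude_prob_def by auto

lemma amplitude_prob_one:
  assumes P: "prob_rule p" and A2: "axiom_A2 p"
  shows "amplitude_prob p n 1 = 1"
proof -
  let ?e = "three_point_state n 1 0"
  have e: "allowed_state ?e" by (rule allowed_three_point_state) auto
  have "p ?e = (\<lambda>i. if i = n then p ?e i else 0)"
    using A2 e unfolding axiom_A2_def by (auto simp: three_point_state_def)
  moreover have "p ?e sums 1" using P e unfolding prob_rule_def by blast
  ultimately have "p ?e n = 1" using sums_single[of n "p ?e"] sums_unique2 by metis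
  then show ?thesis by (simp add: amplitude_prob_def)
qed

definition merge_trans :: "nat \<Rightarrow> nat \<Rightarrow> nat \<Rightarrow> real" where
  "merge_trans n i j = (if i = (if j = Suc n then n else j) then 1 else 0)"

lemma allowed_merge_trans: "allowed_trans (merge_trans n)"
  unfolding allowed_trans_def merge_trans_def
  using sums_single[of _ "\<lambda>_. 1 :: real"] by simp

lemma apply_merge_trans:
  "apply_trans (merge_trans n) w i = (if i = n then w n + w (Suc n) else if i = Suc n then 0 else w i)"
proof -
  have "apply_trans (merge_trans n) w i = (\<Sum>j\<in>{i, Suc n}. merge_trans n i j * w j)"
    unfolding apply_trans_def by (rule suminf_finite) (auto simp: merge_trans_def)
  then show ?thesis by (auto simp: merge_trans_def)
qed

lemma amplitude_prob_merge:
  assumes A2: "axiom_A2 p" and A3: "axiom_A3 p" and ab: "0 \<le> a" "0 \<le> b" "a + b \<le> 1"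
  shows "amplitude_prob p n a + amplitude_prob p (Suc n) b = amplitude_prob p n (a + b)"
proof -
  let ?w = "three_point_state n a b" and ?u = "three_point_state n (a + b) 0"
  have w: "allowed_state ?w" and u: "allowed_state ?u"
    using ab by (auto intro: allowed_three_point_state)
  have merged: "apply_trans (merge_trans n) ?w = ?u"
    by (intro ext) (simp add: apply_merge_trans three_point_state_def)
  have "(\<Sum>k\<in>{n, Suc n}. p ?w k) = (\<Sum>k\<in>{n, Suc n}. p ?u k)"
    unfolding merged[symmetric]
    by (rule axiom_A3_closed_block[OF A3 w allowed_merge_trans]) (auto simp: merge_trans_def)
  moreover have "p ?u (Suc n) = 0"
    using A2 u unfolding axiom_A2_def by (auto simp: three_point_state_def)
  ultimately show ?thesis
    using prob_eq_amplitude_prob[OF A3 w, of n] prob_eq_amplitude_prob[OF A3 w, of "Suc n"]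
    by (simp add: amplitude_prob_def three_point_state_def)
qed

lemma amplitude_prob_zero:
  assumes "axiom_A2 p"
  shows "amplitude_prob p n 0 = 0"
  using assms allowed_three_point_state[of 0 0 n]
  unfolding axiom_A2_def amplitude_prob_def by (auto simp: three_point_state_def)

lemma amplitude_prob_Suc:
  assumes A2: "axiom_A2 p" and A3: "axiom_A3 p" and "0 \<le> b" "b \<le> 1"
  shows "amplitude_prob p (Suc n) b = amplitude_prob p n b"
  using amplitude_prob_merge[OF A2 A3, of 0 b n] amplitude_prob_zero[OF A2] assms by simp

lemma amplitude_prob_add:
  assumes A2: "axiom_A2 p" and A3: "axiom_A3 p" and "0 \<le> a" "0 \<le> b" "a + b \<le> 1"
  shows "amplitude_prob p n (a + b) = amplitude_prob p n a + amplitude_prob p n b"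
  using amplitude_prob_merge[OF A2 A3] amplitude_prob_Suc[OF A2 A3] assms by simp

lemma additive_nonneg_lower_bound:
  fixes g :: "real \<Rightarrow> real"
  assumes nonneg: "\<And>x. 0 \<le> x \<Longrightarrow> x \<le> 1 \<Longrightarrow> 0 \<le> g x"
    and add: "\<And>a b. 0 \<le> a \<Longrightarrow> 0 \<le> b \<Longrightarrow> a + b \<le> 1 \<Longrightarrow> g (a + b) = g a + g b"
    and one: "g 1 = 1"
    and x: "0 \<le> x" "x \<le> 1" and N: "N > (0::nat)"
  shows "x - 1 / real N \<le> g x"
proof -
  have mono: "g a \<le> g c" if "0 \<le> a" "a \<le> c" "c \<le> 1" for a c
  proof -
    have "g c = g a + g (c - a)" using add[of a "c - a"] that by simp
    then show ?thesis using nonneg[of "c - a"] that by simp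
  qed
  have mult: "g (real k * y) = real k * g y" if "0 \<le> y" "real k * y \<le> 1" for k y
    using that
  proof (induction k)
    case 0
    have "g 0 = g 0 + g 0" using add[of 0 0] by simp
    then show ?case by simp
  next
    case (Suc k)
    have k: "real k * y \<le> 1"
      using Suc.prems mult_right_mono[of "real k" "real (Suc k)" y] by simp
    have "g (real (Suc k) * y) = g (real k * y + y)" by (simp add: algebra_simps)
    also have "\<dots> = g (real k * y) + g y"
      using add[of "real k * y" y] Suc.prems by (simp add: algebra_simps)
    finally show ?case using Suc.IH[OF Suc.prems(1) k] by (simp add: algebra_simps)
  qed
  have unit: "g (1 / real N) = 1 / real N"
    using mult[of "1 / real N" N] N one by (simp add: field_simps)
  define k where "k = nat \<lfloor>real N * x\<rfloor>"
  have k_le: "real k \<le> real N * x" and k_gt: "real N * x < real k + 1"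
    using x by (simp_all add: k_def)
  have kx: "real k / real N \<le> x" using k_le N by (simp add: field_simps)
  have "real N * x \<le> real N" using x by (simp add: mult_left_le)
  with k_le have "real k \<le> real N" by (rule order_trans)
  then have "real k * (1 / real N) \<le> 1" using N by simp
  then have "g (real k / real N) = real k / real N"
    using mult[of "1 / real N" k] unit by simp
  moreover have "g (real k / real N) \<le> g x" using kx x N by (intro mono) auto
  moreover have "x - 1 / real N \<le> real k / real N"
  proof -
    have "x - 1 / real N = (real N * x - 1) / real N" using N by (simp add: field_simps)
    also have "\<dots> \<le> real k / real N" using k_gt by (intro divide_right_mono) auto
    finally show ?thesis .
  qed
  ultimately show ?thesis by linarith
qed

lemma additive_nonneg_eq_id:
  fixes g :: "real \<Rightarrow> real"
  assumes nonneg: "\<And>x. 0 \<le> x \<Longrightarrow> x \<le> 1 \<Longrightarrow> 0 \<le> g x"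
    and add: "\<And>a b. 0 \<le> a \<Longrightarrow> 0 \<le> b \<Longrightarrow> a + b \<le> 1 \<Longrightarrow> g (a + b) = g a + g b"
    and one: "g 1 = 1"
    and x: "0 \<le> x" "x \<le> 1"
  shows "g x = x"
proof (rule ccontr)
  assume "g x \<noteq> x"
  then have "0 < \<bar>g x - x\<bar>" by simp
  then obtain N where N: "inverse (real (Suc N)) < \<bar>g x - x\<bar>"
    using reals_Archimedean by blast
  note lower = additive_nonneg_lower_bound[OF nonneg add one]
  have "x - 1 / real (Suc N) \<le> g x" using lower x by blast
  moreover have "(1 - x) - 1 / real (Suc N) \<le> g (1 - x)" using lower[of "1 - x" "Suc N"] x by simp
  moreover have "g x + g (1 - x) = 1" using add[of x "1 - x"] x one by simp
  ultimately show False using N by (simp add: inverse_eq_divide abs_if split: if_splits)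
qed

theorem theorem4:
  fixes p :: "(nat \<Rightarrow> real) \<Rightarrow> nat \<Rightarrow> real"
  assumes "prob_rule p" and "axiom_A2 p" and "axiom_A3 p"
  shows "\<forall>v. allowed_state v \<longrightarrow> (\<forall>n. p v n = v n)"
proof (intro allI impI)
  fix v n assume v: "allowed_state v"
  have "amplitude_prob p n (v n) = v n"
  proof (rule additive_nonneg_eq_id)
    show "\<And>x. 0 \<le> x \<Longrightarrow> x \<le> 1 \<Longrightarrow> 0 \<le> amplitude_prob p n x"
      using amplitude_prob_nonneg[OF assms(1)] by blast
    show "\<And>a b. 0 \<le> a \<Longrightarrow> 0 \<le> b \<Longrightarrow> a + b \<le> 1 \<Longrightarrow>
        amplitude_prob p n (a + b) = amplitude_prob p n a + amplitude_prob p n b"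
      using amplitude_prob_add[OF assms(2,3)] by blast
    show "amplitude_prob p n 1 = 1" using amplitude_prob_one[OF assms(1,2)] .
    show "0 \<le> v n" "v n \<le> 1" using allowed_state_nonneg[OF v] allowed_state_le_one[OF v] .
  qed
  then show "p v n = v n" using prob_eq_amplitude_prob[OF assms(3) v] by simp
qed

end
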